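(* Let $\alpha>0$, $N\ge1$, $f:\mathbb{R}\to(0,\infty)$ with $\sqrt f$ Lipschitz, $f\in C^4(\mathbb{R})$ and $(\sqrt f)^{(k)}$ bounded for $1\le k\le4$, and let $\mu$ be a centered probability measure on $\mathbb{R}$ with finite fourth moment. For $g\in C^2_b(\mathbb{R})$ let $A^Ng(x)=-\alpha xg'(x)+Nf(x)\int_{\mathbb{R}}[g(x+u/\sqrt N)-g(x)]d\mu(u)$. Then there is a constant $C_N>0$ (possibly depending on $N$, but not on $M$ or $g$) such that for all $g\in C^2_b(\mathbb{R})$ and all $M>0$, $$\sup_{x\in[-M,M]}|(A^Ng)'(x)|\le C_N\|g\|_{2,\infty}(1+M^2).$$
   Context: $\|g\|_{2,\infty}=\|g\|_\infty+\|g'\|_\infty+\|g''\|_\infty$. *)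

theory Defs
  imports "HOL-Analysis.Analysis" "HOL-Probability.Probability"
begin

definition nderiv :: "nat \<Rightarrow> (real \<Rightarrow> real) \<Rightarrow> real \<Rightarrow> real" where
  "nderiv k f = (deriv ^^ k) f"

definition Ck :: "nat \<Rightarrow> (real \<Rightarrow> real) \<Rightarrow> bool" where
  "Ck k f \<longleftrightarrow> (\<forall>j<k. \<forall>x. nderiv j f differentiable at x) \<and> continuous_on UNIV (nderiv k f)"

definition C2b :: "(real \<Rightarrow> real) \<Rightarrow> bool" where
  "C2b g \<longleftrightarrow> Ck 2 g \<and> (\<forall>j\<le>2. bounded (range (nderiv j g)))"

definition sup_norm :: "(real \<Rightarrow> real) \<Rightarrow> real" where
  "sup_norm g = (SUP x. \<bar>g x\<bar>)"

definition norm2inf :: "(real \<Rightarrow> real) \<Rightarrow> real" where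
  "norm2inf g = sup_norm g + sup_norm (deriv g) + sup_norm (deriv (deriv g))"

definition genA :: "real \<Rightarrow> nat \<Rightarrow> (real \<Rightarrow> real) \<Rightarrow> real measure \<Rightarrow> (real \<Rightarrow> real) \<Rightarrow> real \<Rightarrow> real" where
  "genA \<alpha> N f \<mu> g x = - \<alpha> * x * deriv g x
     + real N * f x * (\<integral>u. (g (x + u / sqrt (real N)) - g x) \<partial>\<mu>)"

end

theory Submission
  imports Defs
begin

(* Write m h x for the mean of h(x + U/sqrt N), U ~ mu, so that
   A^N g = -alpha x g' + N f (m g - g). Differentiating under the integral (g' is Lipschitz
   with constant ||g''||) gives (m g)' = m g', hence
     (A^N g)' = -alpha g' - alpha x g'' + N (f' (m g - g) + f (m g' - g')),
   and each of |m g - g|, |m g' - g'| is at most 2 ||g||_{2,infinity}. Since sqrt f is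
   Lipschitz, f grows at most quadratically, and f' = 2 sqrt f (sqrt f)' grows no faster. *)

lemma bounded_real_derivative_imp_lipschitz:
  fixes f f' :: "real \<Rightarrow> real"
  assumes "\<And>x. (f has_real_derivative f' x) (at x)" and "\<And>x. \<bar>f' x\<bar> \<le> B"
  shows "B-lipschitz_on UNIV f"
proof (rule bounded_derivative_imp_lipschitz)
  show "(f has_derivative (*) (f' x)) (at x within UNIV)" for x
    using assms(1) by (simp add: has_field_derivative_imp_has_derivative)
  show "onorm ((*) (f' x)) \<le> B" for x
    using assms(2) by (intro onorm_le) (simp add: abs_mult mult_right_mono)
  show "0 \<le> B" using assms(2) order_trans abs_ge_zero by blast
qed simp

lemma first_order_remainder_le:
  fixes h h' :: "real \<Rightarrow> real"
  assumes "\<And>t. (h has_real_derivative h' t) (at t)" and "B-lipschitz_on UNIV h'"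
  shows "\<bar>h b - h a - (b - a) * h' a\<bar> \<le> B * (b - a)\<^sup>2"
proof -
  have "\<bar>h' x - h' a\<bar> \<le> B * \<bar>b - a\<bar>" if "x \<in> closed_segment a b" for x
  proof -
    have "\<bar>h' x - h' a\<bar> \<le> B * \<bar>x - a\<bar>"
      using lipschitz_onD[OF assms(2), of x a] by (simp add: dist_real_def)
    also have "\<dots> \<le> B * \<bar>b - a\<bar>"
      using segment_bound1[OF that] lipschitz_on_nonneg[OF assms(2)] by (intro mult_left_mono) auto
    finally show ?thesis .
  qed
  then have "\<bar>h b - h a - (b - a) * h' a\<bar> \<le> \<bar>b - a\<bar> * (B * \<bar>b - a\<bar>)"
    using vector_differentiable_bound_linearization[of "closed_segment a b" h h' a b a "B * \<bar>b - a\<bar>"]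
      assms(1)
    by (auto simp: has_real_derivative_iff_has_vector_derivative[symmetric] has_field_derivative_at_within)
  then show ?thesis by (simp add: power2_eq_square mult.left_commute)
qed

lemma has_real_derivative_if_quadratic_remainder:
  assumes "\<And>y. \<bar>H y - H x - (y - x) * D\<bar> \<le> B * (y - x)\<^sup>2"
  shows "(H has_real_derivative D) (at x)"
  unfolding has_field_derivative_iff
proof (rule LIM_zero_cancel, rule Lim_null_comparison)
  show "\<forall>\<^sub>F y in at x. norm ((H y - H x) / (y - x) - D) \<le> B * \<bar>y - x\<bar>"
    unfolding eventually_at_filter
  proof (intro always_eventually allI impI)
    fix y :: real assume "y \<noteq> x"
    then have "(H y - H x) / (y - x) - D = (H y - H x - (y - x) * D) / (y - x)"
      by (simp add: field_simps)
    then have "norm ((H y - H x) / (y - x) - D) = \<bar>H y - H x - (y - x) * D\<bar> / \<bar>y - x\<bar>"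
      by (simp add: abs_divide)
    also have "\<dots> \<le> B * \<bar>y - x\<bar>"
      using assms[of y] \<open>y \<noteq> x\<close> by (simp add: divide_le_eq power2_eq_square mult.assoc)
    finally show "norm ((H y - H x) / (y - x) - D) \<le> B * \<bar>y - x\<bar>" .
  qed
  show "((\<lambda>y. B * \<bar>y - x\<bar>) \<longlongrightarrow> 0) (at x)"
  proof -
    have "((\<lambda>y. B * \<bar>y - x\<bar>) \<longlongrightarrow> B * \<bar>x - x\<bar>) (at x)"
      by (intro tendsto_intros)
    then show ?thesis by simp
  qed
qed

definition shift_mean :: "'a measure \<Rightarrow> ('a \<Rightarrow> real) \<Rightarrow> (real \<Rightarrow> real) \<Rightarrow> real \<Rightarrow> real" where
  "shift_mean \<mu> \<phi> h x = (\<integral>u. h (x + \<phi> u) \<partial>\<mu>)"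

context prob_space
begin

lemma abs_integral_le_const:
  fixes f :: "'a \<Rightarrow> real"
  assumes "integrable M f" "\<And>u. \<bar>f u\<bar> \<le> c"
  shows "\<bar>\<integral>u. f u \<partial>M\<bar> \<le> c"
proof -
  have "\<integral>u. f u \<partial>M \<le> c" "- c \<le> \<integral>u. f u \<partial>M"
    using assms by (auto intro!: integral_le_const integral_ge_const simp: abs_le_iff minus_le_iff)
  then show ?thesis by linarith
qed

lemma integrable_bounded_continuous_shift:
  fixes h :: "real \<Rightarrow> real"
  assumes "\<phi> \<in> borel_measurable M" "continuous_on UNIV h" "\<And>t. \<bar>h t\<bar> \<le> B"
  shows "integrable M (\<lambda>u. h (x + \<phi> u))"
proof (rule integrable_const_bound[where B = B])
  have "h \<in> borel_measurable borel"
    using assms(2) by (rule borel_measurable_continuous_onI)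
  then show "(\<lambda>u. h (x + \<phi> u)) \<in> borel_measurable M"
    using assms(1) by measurable
qed (use assms(3) in auto)

lemma shift_mean_abs_le:
  fixes h :: "real \<Rightarrow> real"
  assumes "\<phi> \<in> borel_measurable M" "continuous_on UNIV h" "\<And>t. \<bar>h t\<bar> \<le> B"
  shows "\<bar>shift_mean M \<phi> h x\<bar> \<le> B"
  unfolding shift_mean_def
  using assms by (intro abs_integral_le_const integrable_bounded_continuous_shift)

lemma shift_mean_has_real_derivative:
  fixes h h' :: "real \<Rightarrow> real"
  assumes \<phi>: "\<phi> \<in> borel_measurable M"
    and h: "\<And>t. (h has_real_derivative h' t) (at t)" "\<And>t. \<bar>h t\<bar> \<le> B"
    and h': "\<And>t. \<bar>h' t\<bar> \<le> B" "B-lipschitz_on UNIV h'"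
  shows "(shift_mean M \<phi> h has_real_derivative shift_mean M \<phi> h' x) (at x)"
proof (rule has_real_derivative_if_quadratic_remainder)
  have "continuous_on UNIV h"
    using h(1) by (meson DERIV_isCont continuous_at_imp_continuous_on)
  moreover have "continuous_on UNIV h'"
    using h'(2) by (rule lipschitz_on_continuous_on)
  ultimately have int: "integrable M (\<lambda>u. h (t + \<phi> u))" "integrable M (\<lambda>u. h' (t + \<phi> u))" for t
    using integrable_bounded_continuous_shift[OF \<phi>] h(2) h'(1) by blast+
  fix y
  have "shift_mean M \<phi> h y - shift_mean M \<phi> h x - (y - x) * shift_mean M \<phi> h' x
      = (\<integral>u. h (y + \<phi> u) - h (x + \<phi> u) - (y - x) * h' (x + \<phi> u) \<partial>M)"
    unfolding shift_mean_def using int by simp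
  also have "\<bar>\<dots>\<bar> \<le> B * (y - x)\<^sup>2"
    using int first_order_remainder_le[OF h(1) h'(2), of "y + \<phi> u" "x + \<phi> u" for u]
    by (intro abs_integral_le_const) auto
  finally show "\<bar>shift_mean M \<phi> h y - shift_mean M \<phi> h x - (y - x) * shift_mean M \<phi> h' x\<bar>
      \<le> B * (y - x)\<^sup>2" .
qed

end

lemma abs_le_sup_norm:
  assumes "bounded (range h)"
  shows "\<bar>h t\<bar> \<le> sup_norm h"
proof -
  obtain B where "\<forall>y\<in>range h. norm y \<le> B" using assms bounded_iff by blast
  then have "bdd_above (range (\<lambda>x. \<bar>h x\<bar>))" by (intro bdd_aboveI[of _ B]) auto
  then show ?thesis unfolding sup_norm_def by (rule cSUP_upper[OF UNIV_I])
qed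

lemma nderiv_0_1_2: "nderiv 0 h = h" "nderiv 1 h = deriv h" "nderiv 2 h = deriv (deriv h)"
  by (simp_all add: nderiv_def numeral_2_eq_2)

lemma C2b_has_real_derivatives:
  assumes "C2b g"
  shows "(g has_real_derivative deriv g t) (at t)"
    and "(deriv g has_real_derivative deriv (deriv g) t) (at t)"
proof -
  have "nderiv j g differentiable at t" if "j < 2" for j
    using assms that unfolding C2b_def Ck_def by blast
  from this[of 0] this[of 1] show "(g has_real_derivative deriv g t) (at t)"
    and "(deriv g has_real_derivative deriv (deriv g) t) (at t)"
    unfolding nderiv_0_1_2 by (simp_all add: DERIV_deriv_iff_real_differentiable)
qed

lemma C2b_continuous_on:
  assumes "C2b g"
  shows "continuous_on UNIV g" "continuous_on UNIV (deriv g)"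
  using C2b_has_real_derivatives[OF assms]
  by (meson DERIV_isCont continuous_at_imp_continuous_on)+

lemma C2b_abs_le_norm2inf:
  assumes "C2b g"
  shows "\<bar>g t\<bar> \<le> norm2inf g" "\<bar>deriv g t\<bar> \<le> norm2inf g" "\<bar>deriv (deriv g) t\<bar> \<le> norm2inf g"
proof -
  have "bounded (range (nderiv j g))" if "j \<le> 2" for j
    using assms that unfolding C2b_def by blast
  from this[of 0] this[of 1] this[of 2]
  have "bounded (range g)" "bounded (range (deriv g))" "bounded (range (deriv (deriv g)))"
    unfolding nderiv_0_1_2 by simp_all
  note bounds = this[THEN abs_le_sup_norm]
  have "0 \<le> sup_norm g" "0 \<le> sup_norm (deriv g)" "0 \<le> sup_norm (deriv (deriv g))"
    using bounds[of 0] by (auto intro: order_trans)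
  then show "\<bar>g t\<bar> \<le> norm2inf g" "\<bar>deriv g t\<bar> \<le> norm2inf g" "\<bar>deriv (deriv g) t\<bar> \<le> norm2inf g"
    using bounds[of t] unfolding norm2inf_def by linarith+
qed

lemma divide_const_measurable_of_sets_borel:
  fixes c :: real
  assumes "sets \<mu> = sets borel"
  shows "(\<lambda>u. u / c) \<in> borel_measurable \<mu>"
proof -
  have "(\<lambda>u. u / c) \<in> borel_measurable borel"
    by measurable
  then show ?thesis
    by (simp add: measurable_cong_sets[OF assms refl])
qed

lemma genA_eq_shift_mean:
  assumes "prob_space \<mu>" "sets \<mu> = sets borel" "C2b g"
  shows "genA \<alpha> N f \<mu> g x
    = - \<alpha> * x * deriv g x + real N * f x * (shift_mean \<mu> (\<lambda>u. u / sqrt (real N)) g x - g x)"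
proof -
  interpret prob_space \<mu> by fact
  have "(\<lambda>u. u / sqrt (real N)) \<in> borel_measurable \<mu>"
    using assms(2) by (rule divide_const_measurable_of_sets_borel)
  moreover note C2b_continuous_on(1)[OF assms(3)]
  ultimately have "integrable \<mu> (\<lambda>u. g (x + u / sqrt (real N)))"
    using C2b_abs_le_norm2inf(1)[OF assms(3)] by (rule integrable_bounded_continuous_shift)
  then show ?thesis
    by (simp add: genA_def shift_mean_def prob_space)
qed

lemma genA_has_real_derivative:
  fixes N :: nat
  assumes "prob_space \<mu>" "sets \<mu> = sets borel" "C2b g"
    and f: "(f has_real_derivative f') (at x)"
  defines "m \<equiv> shift_mean \<mu> (\<lambda>u. u / sqrt (real N))"
  shows "(genA \<alpha> N f \<mu> g has_real_derivative
      - \<alpha> * deriv g x - \<alpha> * x * deriv (deriv g) x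
      + real N * (f' * (m g x - g x) + f x * (m (deriv g) x - deriv g x))) (at x)"
proof -
  interpret prob_space \<mu> by fact
  note g = C2b_has_real_derivatives[OF assms(3)] C2b_abs_le_norm2inf[OF assms(3)]
  have "(m g has_real_derivative m (deriv g) x) (at x)"
    unfolding m_def
  proof (rule shift_mean_has_real_derivative)
    show "(\<lambda>u. u / sqrt (real N)) \<in> borel_measurable \<mu>"
      using assms(2) by (rule divide_const_measurable_of_sets_borel)
    show "(norm2inf g)-lipschitz_on UNIV (deriv g)"
      using g by (intro bounded_real_derivative_imp_lipschitz)
  qed (use g in auto)
  then show ?thesis
    unfolding genA_eq_shift_mean[OF assms(1-3), abs_def] m_def[symmetric]
    by (auto intro!: derivative_eq_intros g f simp: algebra_simps)
qed

lemma abs_deriv_genA_le: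
  fixes N :: nat
  assumes "prob_space \<mu>" "sets \<mu> = sets borel" "C2b g"
    and f: "(f has_real_derivative f') (at x)"
  shows "\<bar>deriv (genA \<alpha> N f \<mu> g) x\<bar>
    \<le> norm2inf g * (\<bar>\<alpha>\<bar> * (1 + \<bar>x\<bar>) + 2 * real N * (\<bar>f'\<bar> + \<bar>f x\<bar>))"
proof -
  interpret prob_space \<mu> by fact
  define n where "n = norm2inf g"
  define m where "m = shift_mean \<mu> (\<lambda>u. u / sqrt (real N))"
  note g = C2b_abs_le_norm2inf[OF assms(3), folded n_def]
  have "(\<lambda>u. u / sqrt (real N)) \<in> borel_measurable \<mu>"
    using assms(2) by (rule divide_const_measurable_of_sets_borel)
  moreover note C2b_continuous_on[OF assms(3)]
  ultimately have "\<bar>m g x\<bar> \<le> n" "\<bar>m (deriv g) x\<bar> \<le> n"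
    unfolding m_def using g by (blast intro: shift_mean_abs_le)+
  then have jumps: "\<bar>m g x - g x\<bar> \<le> 2 * n" "\<bar>m (deriv g) x - deriv g x\<bar> \<le> 2 * n"
    using g[of x] by linarith+
  have "\<bar>f' * (m g x - g x)\<bar> \<le> \<bar>f'\<bar> * (2 * n)"
    "\<bar>f x * (m (deriv g) x - deriv g x)\<bar> \<le> \<bar>f x\<bar> * (2 * n)"
    using jumps by (simp_all add: abs_mult mult_left_mono)
  then have "\<bar>f' * (m g x - g x) + f x * (m (deriv g) x - deriv g x)\<bar>
      \<le> \<bar>f'\<bar> * (2 * n) + \<bar>f x\<bar> * (2 * n)"
    by linarith
  then have "\<bar>real N * (f' * (m g x - g x) + f x * (m (deriv g) x - deriv g x))\<bar>
      \<le> real N * (\<bar>f'\<bar> * (2 * n) + \<bar>f x\<bar> * (2 * n))"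
    by (simp add: abs_mult mult_left_mono)
  moreover have "\<bar>\<alpha> * deriv g x\<bar> \<le> \<bar>\<alpha>\<bar> * n" "\<bar>\<alpha> * x * deriv (deriv g) x\<bar> \<le> \<bar>\<alpha>\<bar> * \<bar>x\<bar> * n"
    using g[of x] by (simp_all add: abs_mult mult_left_mono)
  ultimately have "\<bar>- \<alpha> * deriv g x - \<alpha> * x * deriv (deriv g) x
      + real N * (f' * (m g x - g x) + f x * (m (deriv g) x - deriv g x))\<bar>
    \<le> \<bar>\<alpha>\<bar> * n + \<bar>\<alpha>\<bar> * \<bar>x\<bar> * n + real N * (\<bar>f'\<bar> * (2 * n) + \<bar>f x\<bar> * (2 * n))"
    by linarith
  also have "\<dots> = n * (\<bar>\<alpha>\<bar> * (1 + \<bar>x\<bar>) + 2 * real N * (\<bar>f'\<bar> + \<bar>f x\<bar>))"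
    by (simp add: algebra_simps)
  finally show ?thesis
    using genA_has_real_derivative[OF assms, of \<alpha> N, THEN DERIV_imp_deriv]
    unfolding n_def m_def by simp
qed

lemma abs_derivative_le_of_sqrt_derivative:
  assumes "f x > 0" "(f has_real_derivative f') (at x)" "\<bar>deriv (\<lambda>t. sqrt (f t)) x\<bar> \<le> K"
  shows "\<bar>f'\<bar> \<le> 2 * K * sqrt (f x)"
proof -
  have "((\<lambda>t. sqrt (f t)) has_real_derivative f' / (2 * sqrt (f x))) (at x)"
    using DERIV_chain2[OF DERIV_real_sqrt[OF assms(1)] assms(2)] by (simp add: field_simps)
  then have "\<bar>f'\<bar> / (2 * sqrt (f x)) \<le> K"
    using assms(1,3) by (simp add: DERIV_imp_deriv abs_divide)
  then show ?thesis
    using assms(1) by (simp add: pos_divide_le_eq ac_simps)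
qed

lemma quadratic_growth_of_lipschitz_sqrt:
  assumes pos: "\<And>x. f x > 0"
    and f': "\<And>x. (f has_real_derivative f' x) (at x)"
    and L: "L-lipschitz_on UNIV (\<lambda>x. sqrt (f x))"
    and K: "\<And>x. \<bar>deriv (\<lambda>t. sqrt (f t)) x\<bar> \<le> K"
  shows "\<bar>f' x\<bar> + \<bar>f x\<bar> \<le> (K\<^sup>2 + 4 * f 0 + 4 * L\<^sup>2) * (1 + x\<^sup>2)"
proof -
  have "\<bar>f' x\<bar> \<le> 2 * K * sqrt (f x)"
    using abs_derivative_le_of_sqrt_derivative[OF pos f' K] .
  also have "\<dots> \<le> K\<^sup>2 + f x"
    using sum_squares_bound[of K "sqrt (f x)"] pos[of x] by simp
  finally have "\<bar>f' x\<bar> + f x \<le> K\<^sup>2 + 2 * f x" by simp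
  moreover have "f x \<le> 2 * f 0 + 2 * L\<^sup>2 * x\<^sup>2"
  proof -
    have "sqrt (f x) \<le> sqrt (f 0) + L * \<bar>x\<bar>"
      using lipschitz_onD[OF L, of x 0] by (simp add: dist_real_def)
    then have "(sqrt (f x))\<^sup>2 \<le> (sqrt (f 0) + L * \<bar>x\<bar>)\<^sup>2"
      by (rule power_mono) (use pos[of x] in simp)
    also have "\<dots> \<le> 2 * (sqrt (f 0))\<^sup>2 + 2 * (L * \<bar>x\<bar>)\<^sup>2"
      using sum_squares_bound[of "sqrt (f 0)" "L * \<bar>x\<bar>"] by (simp add: power2_sum)
    finally show ?thesis
      using pos[of x] pos[of 0] by (simp add: power_mult_distrib)
  qed
  moreover have "(K\<^sup>2 + 4 * f 0 + 4 * L\<^sup>2) * (1 + x\<^sup>2)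
      = K\<^sup>2 + 4 * f 0 + 4 * L\<^sup>2 * x\<^sup>2 + ((K\<^sup>2 + 4 * f 0) * x\<^sup>2 + 4 * L\<^sup>2)"
    by (simp add: algebra_simps)
  moreover have "0 \<le> (K\<^sup>2 + 4 * f 0) * x\<^sup>2 + 4 * L\<^sup>2"
    using pos[of 0] by simp
  ultimately show ?thesis
    using pos[of x] by linarith
qed

lemma one_plus_abs_le_one_plus_square: "1 + \<bar>x::real\<bar> \<le> 2 * (1 + x\<^sup>2)"
proof -
  have "\<bar>x\<bar> \<le> 1 + x\<^sup>2"
  proof (cases "\<bar>x\<bar> \<le> 1")
    case True
    then show ?thesis using zero_le_power2[of x] by linarith
  next
    case False
    then have "\<bar>x\<bar> * 1 \<le> \<bar>x\<bar> * \<bar>x\<bar>" by (intro mult_left_mono) auto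
    then show ?thesis by (simp add: power2_eq_square)
  qed
  then have "1 + \<bar>x\<bar> \<le> 2 + x\<^sup>2" by simp
  also have "\<dots> \<le> 2 * (1 + x\<^sup>2)" by simp
  finally show ?thesis .
qed

lemma abs_deriv_genA_le_quadratic:
  fixes N :: nat
  assumes "prob_space \<mu>" "sets \<mu> = sets borel" "C2b g"
    and f': "\<And>t. (f has_real_derivative f' t) (at t)"
    and growth: "\<And>t. \<bar>f' t\<bar> + \<bar>f t\<bar> \<le> K * (1 + t\<^sup>2)"
    and x: "\<bar>x\<bar> \<le> M"
  shows "\<bar>deriv (genA \<alpha> N f \<mu> g) x\<bar> \<le> (2 * \<bar>\<alpha>\<bar> + 2 * real N * K) * norm2inf g * (1 + M\<^sup>2)"
proof -
  have "\<bar>\<alpha>\<bar> * (1 + \<bar>x\<bar>) \<le> \<bar>\<alpha>\<bar> * (2 * (1 + x\<^sup>2))"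
    using one_plus_abs_le_one_plus_square[of x] by (intro mult_left_mono) auto
  moreover have "2 * real N * (\<bar>f' x\<bar> + \<bar>f x\<bar>) \<le> 2 * real N * (K * (1 + x\<^sup>2))"
    using growth[of x] by (intro mult_left_mono) auto
  ultimately have bound_at_x: "\<bar>\<alpha>\<bar> * (1 + \<bar>x\<bar>) + 2 * real N * (\<bar>f' x\<bar> + \<bar>f x\<bar>)
      \<le> (2 * \<bar>\<alpha>\<bar> + 2 * real N * K) * (1 + x\<^sup>2)"
    by (simp add: algebra_simps)
  have "0 \<le> norm2inf g"
    using C2b_abs_le_norm2inf(1)[OF assms(3), of 0] by linarith
  have "0 \<le> K"
    using growth[of 0] abs_ge_zero[of "f' 0"] abs_ge_zero[of "f 0"] by simp
  have "\<bar>deriv (genA \<alpha> N f \<mu> g) x\<bar>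
      \<le> norm2inf g * (\<bar>\<alpha>\<bar> * (1 + \<bar>x\<bar>) + 2 * real N * (\<bar>f' x\<bar> + \<bar>f x\<bar>))"
    by (rule abs_deriv_genA_le[OF assms(1-3) f'])
  also have "\<dots> \<le> norm2inf g * ((2 * \<bar>\<alpha>\<bar> + 2 * real N * K) * (1 + x\<^sup>2))"
    using bound_at_x \<open>0 \<le> norm2inf g\<close> by (rule mult_left_mono)
  also have "\<dots> \<le> norm2inf g * ((2 * \<bar>\<alpha>\<bar> + 2 * real N * K) * (1 + M\<^sup>2))"
    using \<open>0 \<le> K\<close> \<open>0 \<le> norm2inf g\<close> x abs_le_square_iff[of x M]
    by (intro mult_left_mono add_left_mono) auto
  finally show ?thesis
    by (simp only: ac_simps)
qed

theorem lemma5p1: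
  fixes \<alpha> :: real and N :: nat and f :: "real \<Rightarrow> real" and \<mu> :: "real measure"
  assumes "\<alpha> > 0" and "N \<ge> 1"
    and "\<forall>x. f x > 0"
    and "\<exists>L. L-lipschitz_on UNIV (\<lambda>x. sqrt (f x))"
    and "Ck 4 f"
    and "\<forall>k\<in>{1..4}. bounded (range (nderiv k (\<lambda>x. sqrt (f x))))"
    and "prob_space \<mu>" and "sets \<mu> = sets borel"
    and "integrable \<mu> (\<lambda>u. u ^ 4)"
    and "(\<integral>u. u \<partial>\<mu>) = 0"
  shows "\<exists>C>0. \<forall>g. C2b g \<longrightarrow> (\<forall>M>0.
           (\<forall>x\<in>{-M..M}. genA \<alpha> N f \<mu> g differentiable at x \<and>
              \<bar>deriv (genA \<alpha> N f \<mu> g) x\<bar> \<le> C * norm2inf g * (1 + M\<^sup>2)))"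
proof -
  obtain L where L: "L-lipschitz_on UNIV (\<lambda>x. sqrt (f x))"
    using assms(4) by blast
  have "bounded (range (nderiv 1 (\<lambda>t. sqrt (f t))))"
    using assms(6) by simp
  then obtain K where K: "\<And>x. \<bar>deriv (\<lambda>t. sqrt (f t)) x\<bar> \<le> K"
    unfolding nderiv_0_1_2 bounded_iff by auto
  have f': "(f has_real_derivative deriv f x) (at x)" for x
    using assms(5) unfolding Ck_def
    by (metis DERIV_deriv_iff_real_differentiable nderiv_0_1_2(1) zero_less_numeral)
  define Kf where "Kf = K\<^sup>2 + 4 * f 0 + 4 * L\<^sup>2"
  have growth: "\<bar>deriv f x\<bar> + \<bar>f x\<bar> \<le> Kf * (1 + x\<^sup>2)" for x
    unfolding Kf_def using assms(3)[rule_format] f' L K by (rule quadratic_growth_of_lipschitz_sqrt)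
  show ?thesis
  proof (intro exI[of _ "2 * \<alpha> + 2 * real N * Kf"] conjI allI impI ballI)
    show "2 * \<alpha> + 2 * real N * Kf > 0"
      using assms(1,3) unfolding Kf_def by (simp add: add_pos_nonneg less_imp_le)
    fix g and M x :: real assume g: "C2b g" and "x \<in> {-M..M}"
    then have "\<bar>x\<bar> \<le> M" by auto
    show "genA \<alpha> N f \<mu> g differentiable at x"
      using genA_has_real_derivative[OF assms(7,8) g f'] real_differentiable_def by blast
    show "\<bar>deriv (genA \<alpha> N f \<mu> g) x\<bar> \<le> (2 * \<alpha> + 2 * real N * Kf) * norm2inf g * (1 + M\<^sup>2)"
      using abs_deriv_genA_le_quadratic[OF assms(7,8) g f' growth \<open>\<bar>x\<bar> \<le> M\<close>, where \<alpha> = \<alpha> and N = N]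
        assms(1)
      by simp
  qed
qed

end
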